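(* Let $P$ be a finite poset and $R$ a restriction function on $P$. Then for every $p\in P$ and every $k\in R(p)$ there exists $f\in\mathrm{Inc}^R(P)$ with $f(p)=k$ if and only if $R$ is consistent.
   Context: A restriction function assigns to each $p\in P$ a nonempty finite set $R(p)\subseteq\mathbb{Z}$. $\mathrm{Inc}^R(P)$ is the set of $f:P\to\mathbb{Z}$ with $f(p)\in R(p)$ for all $p$ and $p_1<p_2\Rightarrow f(p_1)<f(p_2)$. $R$ is consistent if for every cover relation $x\lessdot y$ in $P$, $\min R(x)<\min R(y)$ and $\max R(x)<\max R(y)$. *)

theory Defs
  imports Main
begin

definition restriction_fn :: "'a set \<Rightarrow> ('a \<Rightarrow> int set) \<Rightarrow> bool" where
  "restriction_fn P R \<longleftrightarrow> (\<forall>p\<in>P. R p \<noteq> {} \<and> finite (R p))"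

definition Inc_R :: "'a::order set \<Rightarrow> ('a \<Rightarrow> int set) \<Rightarrow> ('a \<Rightarrow> int) set" where
  "Inc_R P R = {f. (\<forall>p\<in>P. f p \<in> R p) \<and> (\<forall>p1\<in>P. \<forall>p2\<in>P. p1 < p2 \<longrightarrow> f p1 < f p2)}"

definition covers :: "'a::order set \<Rightarrow> 'a \<Rightarrow> 'a \<Rightarrow> bool" where
  "covers P x y \<longleftrightarrow> x \<in> P \<and> y \<in> P \<and> x < y \<and> \<not> (\<exists>z\<in>P. x < z \<and> z < y)"

definition consistent :: "'a::order set \<Rightarrow> ('a \<Rightarrow> int set) \<Rightarrow> bool" where
  "consistent P R \<longleftrightarrow> (\<forall>x y. covers P x y \<longrightarrow> Min (R x) < Min (R y) \<and> Max (R x) < Max (R y))"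

end

theory Submission
  imports Defs
begin

text \<open>Necessity: comparing a cover \<open>x \<lessdot> y\<close> with an extension taking the value \<open>Min (R y)\<close>
  at \<open>y\<close> (resp. \<open>Max (R x)\<close> at \<open>x\<close>) gives both inequalities. Sufficiency: consistency
  propagates from covers to all comparable pairs, and then the function that is \<open>k\<close> at \<open>p\<close>,
  \<open>Max\<close> strictly above \<open>p\<close> and \<open>Min\<close> elsewhere is strictly increasing.\<close>

lemma strict_mono_on_if_covers:
  fixes P :: "'a::order set" and g :: "'a \<Rightarrow> 'b::order"
  assumes "finite P" and "\<And>x y. covers P x y \<Longrightarrow> g x < g y"
  shows "strict_mono_on P g"
proof (rule strict_mono_onI)
  fix x y assume "x \<in> P" "y \<in> P" "x < y"
  then show "g x < g y"
  proof (induction "card {z\<in>P. x < z \<and> z < y}" arbitrary: x y rule: less_induct)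
    case less
    show ?case
    proof (cases "\<exists>z\<in>P. x < z \<and> z < y")
      case False
      then show ?thesis using less.prems assms(2) unfolding covers_def by blast
    next
      case True
      then obtain z where z: "z \<in> P" "x < z" "z < y" by blast
      have "finite {w\<in>P. x < w \<and> w < y}" using assms(1) by simp
      moreover have "{w\<in>P. x < w \<and> w < z} \<subset> {w\<in>P. x < w \<and> w < y}"
        and "{w\<in>P. z < w \<and> w < y} \<subset> {w\<in>P. x < w \<and> w < y}"
        using z less_trans by auto
      ultimately have "card {w\<in>P. x < w \<and> w < z} < card {w\<in>P. x < w \<and> w < y}"
        and "card {w\<in>P. z < w \<and> w < y} < card {w\<in>P. x < w \<and> w < y}"
        by (simp_all add: psubset_card_mono)
      with less.hyps less.prems z have "g x < g z" and "g z < g y" by blast+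
      then show ?thesis by (rule less_trans)
    qed
  qed
qed

lemma restriction_fn_Min_le_Max:
  assumes "restriction_fn P R" and "p \<in> P" and "k \<in> R p"
  shows "Min (R p) \<le> k" and "k \<le> Max (R p)"
  using assms by (auto simp: restriction_fn_def)

lemma consistent_if_all_values_extend:
  fixes P :: "'a::order set"
  assumes "restriction_fn P R" and extend: "\<forall>p\<in>P. \<forall>k\<in>R p. \<exists>f\<in>Inc_R P R. f p = k"
  shows "consistent P R"
  unfolding consistent_def
proof (intro allI impI conjI)
  fix x y assume "covers P x y"
  then have xy: "x \<in> P" "y \<in> P" "x < y" unfolding covers_def by auto
  have ne: "R q \<noteq> {}" "finite (R q)" if "q \<in> P" for q
    using assms(1) that unfolding restriction_fn_def by auto
  obtain f where f: "f \<in> Inc_R P R" "f y = Min (R y)"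
    using extend xy(2) Min_in[OF ne(2,1)[OF xy(2)]] by blast
  have "Min (R x) \<le> f x" and "f x < f y"
    using f(1) xy restriction_fn_Min_le_Max[OF assms(1)] unfolding Inc_R_def by auto
  with f(2) show "Min (R x) < Min (R y)" by simp
  obtain h where h: "h \<in> Inc_R P R" "h x = Max (R x)"
    using extend xy(1) Max_in[OF ne(2,1)[OF xy(1)]] by blast
  have "h y \<le> Max (R y)" and "h x < h y"
    using h(1) xy restriction_fn_Min_le_Max[OF assms(1)] unfolding Inc_R_def by auto
  with h(2) show "Max (R x) < Max (R y)" by simp
qed

definition extension_at :: "('a::order \<Rightarrow> int set) \<Rightarrow> 'a \<Rightarrow> int \<Rightarrow> 'a \<Rightarrow> int" where
  "extension_at R p k q = (if q = p then k else if p < q then Max (R q) else Min (R q))"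

lemma extension_at_in_Inc_R:
  fixes P :: "'a::order set"
  assumes "finite P" and R: "restriction_fn P R" and "consistent P R"
    and p: "p \<in> P" and k: "k \<in> R p"
  shows "extension_at R p k \<in> Inc_R P R"
proof -
  have "strict_mono_on P (\<lambda>q. Min (R q))" and "strict_mono_on P (\<lambda>q. Max (R q))"
    using assms(3) by (auto intro!: strict_mono_on_if_covers[OF assms(1)] simp: consistent_def)
  then have Min_less: "Min (R q1) < Min (R q2)" and Max_less: "Max (R q1) < Max (R q2)"
    if "q1 \<in> P" "q2 \<in> P" "q1 < q2" for q1 q2
    using that by (auto dest: strict_mono_onD)
  let ?f = "extension_at R p k"
  have in_R: "?f q \<in> R q" if "q \<in> P" for q
    using R that k unfolding restriction_fn_def extension_at_def by auto
  have bounds: "Min (R q) \<le> ?f q" "?f q \<le> Max (R q)" if "q \<in> P" for q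
    using restriction_fn_Min_le_Max[OF R that in_R[OF that]] by auto
  have "?f q1 < ?f q2" if q: "q1 \<in> P" "q2 \<in> P" "q1 < q2" for q1 q2
  proof (cases "p \<le> q1")
    case True
    then have "?f q2 = Max (R q2)"
      using q(3) unfolding extension_at_def by auto
    then show ?thesis using bounds(2)[OF q(1)] Max_less[OF q] by simp
  next
    case False
    then have "?f q1 = Min (R q1)"
      unfolding extension_at_def by auto
    then show ?thesis using bounds(1)[OF q(2)] Min_less[OF q] by simp
  qed
  with in_R show ?thesis unfolding Inc_R_def by blast
qed

theorem proposition2p2:
  fixes P :: "'a::order set" and R :: "'a \<Rightarrow> int set"
  assumes "finite P" and "restriction_fn P R"
  shows "(\<forall>p\<in>P. \<forall>k\<in>R p. \<exists>f\<in>Inc_R P R. f p = k) \<longleftrightarrow> consistent P R"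
proof
  assume "\<forall>p\<in>P. \<forall>k\<in>R p. \<exists>f\<in>Inc_R P R. f p = k"
  then show "consistent P R" using consistent_if_all_values_extend assms(2) by blast
next
  assume "consistent P R"
  then have "extension_at R p k \<in> Inc_R P R \<and> extension_at R p k p = k"
    if "p \<in> P" "k \<in> R p" for p k
    using extension_at_in_Inc_R[OF assms] that by (simp add: extension_at_def)
  then show "\<forall>p\<in>P. \<forall>k\<in>R p. \<exists>f\<in>Inc_R P R. f p = k" by blast
qed

end
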